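(* Let $n\ge 2$ and $t\ge 0$ be integers, and let $a_1,\dots,a_t$ be integers with $1<a_1<\cdots<a_t<n$ and $\gcd(a_j,2n)=1$ for $1\le j\le t$. Then $\chi_{la}(C_{2n}(1,a_1,\dots,a_t))=3$.
   Context: For an integer $m\ge 3$ and integers $s_1,\dots,s_k$, the circulant graph $C_m(s_1,\dots,s_k)$ is the simple graph with vertex set $\mathbb Z_m$ in which distinct vertices $u,v$ are adjacent if and only if $u-v\equiv \pm s_i\pmod m$ for some $i$. For a connected graph $G=(V,E)$ with $q=|E|$, a local antimagic labeling is a bijection $f:E\to\{1,\dots,q\}$ such that adjacent vertices $x,y$ satisfy $f^+(x)\ne f^+(y)$, where $f^+(x)=\sum f(e)$ over edges $e$ incident to $x$; $\chi_{la}(G)$ is the minimum number of distinct values of $f^+$ over all local antimagic labelings $f$ of $G$. *)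

theory Defs
  imports Main
begin

definition circ_vertices :: "nat \<Rightarrow> nat set" where
  "circ_vertices m = {0..<m}"

definition circ_edges :: "nat \<Rightarrow> int set \<Rightarrow> nat set set" where
  "circ_edges m S = {{u, v} | u v. u < m \<and> v < m \<and> u \<noteq> v \<and>
      (\<exists>s\<in>S. (int u - int v) mod int m = s mod int m
            \<or> (int u - int v) mod int m = (- s) mod int m)}"

definition vertex_sum :: "'a set set \<Rightarrow> ('a set \<Rightarrow> nat) \<Rightarrow> 'a \<Rightarrow> nat" where
  "vertex_sum E f x = (\<Sum>e\<in>{e\<in>E. x \<in> e}. f e)"

definition local_antimagic :: "'a set \<Rightarrow> 'a set set \<Rightarrow> ('a set \<Rightarrow> nat) \<Rightarrow> bool" where
  "local_antimagic V E f \<longleftrightarrow>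
     bij_betw f E {1..card E} \<and>
     (\<forall>x\<in>V. \<forall>y\<in>V. {x, y} \<in> E \<longrightarrow> x \<noteq> y \<longrightarrow> vertex_sum E f x \<noteq> vertex_sum E f y)"

definition chi_la :: "'a set \<Rightarrow> 'a set set \<Rightarrow> nat" where
  "chi_la V E = (LEAST k. \<exists>f. local_antimagic V E f \<and> card (vertex_sum E f ` V) = k)"

end

theory Submission
  imports Defs "HOL-Number_Theory.Cong"
begin

text \<open>All generators are odd, so the circulant graph is bipartite between even and odd vertices,
  and each generator \<open>s\<close> traces a Hamiltonian cycle \<open>0, s, 2 s, \<dots>\<close> of length \<open>2 n\<close>.
  Rank the generators \<open>0, \<dots>, k - 1\<close> and give the edges of the generator of rank \<open>i\<close> the labels
  \<open>2 n i + 1, \<dots>, 2 n i + 2 n\<close>, placed along its cycle in the zigzag order \<open>1, 2 n, 2, 2 n - 1, \<dots>\<close>.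
  Two consecutive edges of a cycle then add up to \<open>2 n + 2\<close> or \<open>2 n + 1\<close> according to the parity of
  their common vertex, except at vertex \<open>0\<close> where they add up to \<open>n + 2\<close>. So there are exactly three
  vertex sums, and adjacent vertices, having different parities, get different ones.
  Conversely, if a local antimagic labeling of a regular graph had only two vertex sums \<open>a \<noteq> b\<close>,
  the two colour classes \<open>X\<close>, \<open>Y\<close> would each meet every edge once; counting edges gives
  \<open>|X| = |Y|\<close>, and counting labels gives \<open>|X| a = |Y| b\<close>, a contradiction.\<close>

section \<open>Vertex sums of regular graphs\<close>

lemma sum_vertex_sum_transversal:
  assumes "finite X" "finite E" "\<And>e. e \<in> E \<Longrightarrow> card (X \<inter> e) = 1"
  shows "(\<Sum>x\<in>X. vertex_sum E f x) = (\<Sum>e\<in>E. f e)"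
proof -
  have "(\<Sum>x\<in>X. vertex_sum E f x) = (\<Sum>e\<in>E. \<Sum>x\<in>{x\<in>X. x \<in> e}. f e)"
    unfolding vertex_sum_def using assms(1,2) by (rule sum.swap_restrict)
  also have "\<dots> = (\<Sum>e\<in>E. f e)"
    using assms(3) by (intro sum.cong) (simp_all add: Int_def)
  finally show ?thesis .
qed

lemma card_transversal_mult_degree:
  assumes "finite X" "finite E" "\<And>e. e \<in> E \<Longrightarrow> card (X \<inter> e) = 1"
    and "\<And>x. x \<in> X \<Longrightarrow> card {e\<in>E. x \<in> e} = d"
  shows "card X * d = card E"
proof -
  have "card X * d = (\<Sum>x\<in>X. vertex_sum E (\<lambda>_. 1) x)"
    using assms(4) by (simp add: vertex_sum_def)
  also have "\<dots> = card E"
    using sum_vertex_sum_transversal[OF assms(1-3)] by simp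
  finally show ?thesis .
qed

lemma regular_local_antimagic_card_vertex_sums_ge_3:
  assumes "finite V" and "E \<noteq> {}"
    and edges: "\<And>e. e \<in> E \<Longrightarrow> \<exists>u\<in>V. \<exists>v\<in>V. u \<noteq> v \<and> e = {u, v}"
    and regular: "\<And>x. x \<in> V \<Longrightarrow> card {e\<in>E. x \<in> e} = d"
    and "local_antimagic V E f"
  shows "3 \<le> card (vertex_sum E f ` V)"
proof (rule ccontr)
  assume "\<not> 3 \<le> card (vertex_sum E f ` V)"
  then have few: "card (vertex_sum E f ` V) \<le> 2" by simp
  define F where "F = vertex_sum E f"
  have "finite E"
    using edges by (intro finite_subset[OF _ finite_Pow_iff[THEN iffD2, OF \<open>finite V\<close>]]) blast
  obtain x0 y0 where xy0: "x0 \<in> V" "y0 \<in> V" "x0 \<noteq> y0" "{x0, y0} \<in> E"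
    using \<open>E \<noteq> {}\<close> edges by blast
  have proper: "F u \<noteq> F v" if "u \<in> V" "v \<in> V" "u \<noteq> v" "{u, v} \<in> E" for u v
    using \<open>local_antimagic V E f\<close> that unfolding local_antimagic_def F_def by blast
  define a b where "a = F x0" and "b = F y0"
  have "a \<noteq> b" using proper xy0 by (simp add: a_def b_def)
  have "{a, b} \<subseteq> F ` V" using xy0 by (auto simp: a_def b_def)
  then have F_range: "F ` V = {a, b}"
    using few \<open>a \<noteq> b\<close> \<open>finite V\<close> by (intro card_seteq[symmetric]) (auto simp: F_def)
  define X Y where "X = {x\<in>V. F x = a}" and "Y = {x\<in>V. F x = b}"
  have "card (X \<inter> e) = 1 \<and> card (Y \<inter> e) = 1" if "e \<in> E" for e
  proof -
    obtain u v where uv: "u \<in> V" "v \<in> V" "u \<noteq> v" "e = {u, v}" using edges \<open>e \<in> E\<close> by blast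
    have "F u \<in> {a, b}" "F v \<in> {a, b}" "F u \<noteq> F v" using F_range proper uv \<open>e \<in> E\<close> by auto
    then have "X \<inter> e = {u} \<and> Y \<inter> e = {v} \<or> X \<inter> e = {v} \<and> Y \<inter> e = {u}"
      using uv by (auto simp: X_def Y_def)
    then show ?thesis by auto
  qed
  moreover have "finite X" "finite Y" using \<open>finite V\<close> by (simp_all add: X_def Y_def)
  ultimately have "card X * a = card Y * b" "card X * d = card E" "card Y * d = card E"
    using sum_vertex_sum_transversal[of X E f] sum_vertex_sum_transversal[of Y E f]
      card_transversal_mult_degree[of X E d] card_transversal_mult_degree[of Y E d]
      \<open>finite E\<close> regular by (simp_all add: X_def Y_def F_def)
  moreover have "card E \<noteq> 0" using \<open>E \<noteq> {}\<close> \<open>finite E\<close> by simp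
  ultimately have "card X * d \<noteq> 0" "card X * d = card Y * d" by simp_all
  then have "card X = card Y" "card X \<noteq> 0" by simp_all
  with \<open>card X * a = card Y * b\<close> \<open>a \<noteq> b\<close> show False by simp
qed

lemma chi_la_eqI:
  assumes "local_antimagic V E f" "card (vertex_sum E f ` V) = k"
    and "\<And>g. local_antimagic V E g \<Longrightarrow> k \<le> card (vertex_sum E g ` V)"
  shows "chi_la V E = k"
  unfolding chi_la_def using assms by (intro Least_equality) auto

lemma mod_mult_inverse_cancel:
  fixes m s w u :: nat
  assumes "(s * w) mod m = 1" "u < m"
  shows "((u * w) mod m * s) mod m = u"
proof -
  have "((u * w) mod m * s) mod m = (u * ((s * w) mod m)) mod m"
    by (metis mod_mult_left_eq mod_mult_right_eq mult.assoc mult.commute)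
  then show ?thesis using assms by simp
qed

lemma inj_on_mod_mult_inverse:
  fixes m s w :: nat
  assumes "(s * w) mod m = 1"
  shows "inj_on (\<lambda>u. (u * w) mod m) {0..<m}"
  by (rule inj_onI) (metis assms mod_mult_inverse_cancel atLeastLessThan_iff)

lemma mod_mult_inverse_eq_0_iff:
  fixes m s w u :: nat
  assumes "(s * w) mod m = 1" "u < m"
  shows "(u * w) mod m = 0 \<longleftrightarrow> u = 0"
  using mod_mult_inverse_cancel[OF assms] by auto

lemma even_mod_mult_inverse_iff:
  fixes m s w u :: nat
  assumes "(s * w) mod m = 1" "even m"
  shows "even ((u * w) mod m) \<longleftrightarrow> even u"
proof -
  have "odd (s * w)" using assms by (metis dvd_mod_iff odd_one)
  then show ?thesis using \<open>even m\<close> by (simp add: dvd_mod_iff)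
qed

lemma mod_mult_inverse_add:
  fixes m s w u :: nat
  assumes "(s * w) mod m = 1"
  shows "((u + s) * w) mod m = ((u * w) mod m + 1) mod m"
  by (metis assms distrib_right mod_add_eq mod_add_left_eq)

section \<open>The zigzag labeling of an even cycle\<close>

definition zigzag :: "nat \<Rightarrow> nat \<Rightarrow> nat" where
  "zigzag n p = (if even p then p div 2 + 1 else 2 * n - p div 2)"

lemma bij_betw_zigzag: "bij_betw (zigzag n) {0..<2 * n} {1..2 * n}"
proof -
  have "inj_on (zigzag n) {0..<2 * n}"
  proof (rule inj_onI)
    fix p q assume "p \<in> {0..<2 * n}" "q \<in> {0..<2 * n}" "zigzag n p = zigzag n q"
    then show "p = q" unfolding zigzag_def
      by (cases "even p"; cases "even q"; elim evenE oddE; auto)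
  qed
  moreover have "zigzag n ` {0..<2 * n} \<subseteq> {1..2 * n}"
    by (auto simp: zigzag_def)
  moreover have "card (zigzag n ` {0..<2 * n}) = card {1..2 * n}"
    using \<open>inj_on (zigzag n) {0..<2 * n}\<close> by (simp add: card_image)
  ultimately show ?thesis
    by (simp add: bij_betw_def card_subset_eq)
qed

definition zigzag_pair :: "nat \<Rightarrow> nat \<Rightarrow> nat" where
  "zigzag_pair n p = (if p = 0 then n + 2 else if even p then 2 * n + 2 else 2 * n + 1)"

lemma zigzag_add_pred:
  assumes "p < 2 * n" "n \<ge> 1"
  shows "zigzag n p + zigzag n ((p + 2 * n - 1) mod (2 * n)) = zigzag_pair n p"
proof (cases "p = 0")
  case True
  have "(2 * n - 1) mod (2 * n) = 2 * n - 1" "odd (2 * n - 1)"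
    using assms by simp_all
  moreover have "(2 * n - 1) div 2 = n - 1" using assms by presburger
  ultimately show ?thesis using True assms by (simp add: zigzag_def zigzag_pair_def)
next
  case False
  then have "(p + 2 * n - 1) mod (2 * n) = p - 1" using assms by (simp add: mod_if)
  then show ?thesis using False assms unfolding zigzag_def zigzag_pair_def
    by (cases "even p"; elim evenE oddE; auto)
qed

lemma zigzag_pair_image:
  assumes "n \<ge> 2"
  shows "zigzag_pair n ` {0..<2 * n} = {n + 2, 2 * n + 2, 2 * n + 1}"
proof
  show "zigzag_pair n ` {0..<2 * n} \<subseteq> {n + 2, 2 * n + 2, 2 * n + 1}"
    by (auto simp: zigzag_pair_def)
  have "zigzag_pair n 0 = n + 2" "zigzag_pair n 2 = 2 * n + 2" "zigzag_pair n 1 = 2 * n + 1"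
    by (simp_all add: zigzag_pair_def)
  moreover have "0 \<in> {0..<2 * n}" "2 \<in> {0..<2 * n}" "1 \<in> {0..<2 * n}" using assms by auto
  ultimately show "{n + 2, 2 * n + 2, 2 * n + 1} \<subseteq> zigzag_pair n ` {0..<2 * n}"
    by (metis empty_subsetI image_eqI insert_subset)
qed

lemma div_block_label:
  fixes b q l :: nat
  assumes "1 \<le> l" "l \<le> b"
  shows "(b * q + l - 1) div b = q"
proof -
  have "b * q + l - 1 = (l - 1) + b * q" using assms by simp
  moreover have "l - 1 < b" using assms by simp
  ultimately show ?thesis by simp
qed

lemma bij_betw_block_labels:
  fixes r :: "'a \<Rightarrow> nat" and g :: "'a \<Rightarrow> 'b \<Rightarrow> nat"
  assumes r: "bij_betw r A {0..<k}" and g: "\<And>a. a \<in> A \<Longrightarrow> bij_betw (g a) B {1..b}"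
  shows "bij_betw (\<lambda>(a, x). b * r a + g a x) (A \<times> B) {1..k * b}"
proof -
  let ?h = "\<lambda>(a, x). b * r a + g a x"
  have g_range: "1 \<le> g a x" "g a x \<le> b" if "a \<in> A" "x \<in> B" for a x
    using bij_betw_apply[OF g[OF that(1)] that(2)] by simp_all
  have "inj_on ?h (A \<times> B)"
  proof (rule inj_onI, clarify)
    fix a x a' x' assume in_dom: "a \<in> A" "x \<in> B" "a' \<in> A" "x' \<in> B"
      and eq: "b * r a + g a x = b * r a' + g a' x'"
    have "r a = r a'"
      using div_block_label[OF g_range[OF in_dom(1,2)], of "r a"]
        div_block_label[OF g_range[OF in_dom(3,4)], of "r a'"] eq by simp
    then have "a = a'" using r in_dom by (metis bij_betw_def inj_onD)
    moreover have "g a x = g a x'" using eq \<open>r a = r a'\<close> \<open>a = a'\<close> by simp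
    then have "x = x'" using g[OF in_dom(1)] in_dom by (metis bij_betw_def inj_onD)
    ultimately show "a = a' \<and> x = x'" ..
  qed
  moreover have "?h ` (A \<times> B) \<subseteq> {1..k * b}"
  proof clarify
    fix a x assume "a \<in> A" "x \<in> B"
    then have "b * (r a + 1) \<le> b * k"
      using bij_betw_apply[OF r \<open>a \<in> A\<close>] by (intro mult_le_mono2) simp
    then show "b * r a + g a x \<in> {1..k * b}"
      using g_range[OF \<open>a \<in> A\<close> \<open>x \<in> B\<close>] by (simp add: algebra_simps)
  qed
  moreover have "card (A \<times> B) = k * b"
  proof (cases "A = {}")
    case False
    then obtain a where "a \<in> A" by blast
    then show ?thesis using bij_betw_same_card[OF r] bij_betw_same_card[OF g] by (simp add: card_cartesian_product)
  qed (use bij_betw_same_card[OF r] in simp)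
  ultimately show ?thesis
    by (simp add: bij_betw_def card_image card_subset_eq)
qed

section \<open>Circulant graphs\<close>

lemma int_mod_diff_eq_iff:
  fixes m u v s :: nat
  assumes "u < m"
  shows "(int u - int v) mod int m = int s mod int m \<longleftrightarrow> u = (v + s) mod m"
proof -
  have "u = (v + s) mod m \<longleftrightarrow> int u mod int m = (int v + int s) mod int m"
    using assms by (metis mod_less of_nat_add of_nat_eq_iff zmod_int)
  also have "\<dots> \<longleftrightarrow> (int u - int v) mod int m = int s mod int m"
    by (simp add: mod_eq_dvd_iff algebra_simps)
  finally show ?thesis ..
qed

lemma int_mod_eq_uminus_iff:
  fixes x s m :: int
  shows "x mod m = (- s) mod m \<longleftrightarrow> (- x) mod m = s mod m"
proof -
  have "- x - s = - (x - - s)" by simp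
  then show ?thesis by (simp only: mod_eq_dvd_iff dvd_minus_iff)
qed

lemma mod_add_neq_self:
  fixes u s m :: nat
  assumes "u < m" "0 < s" "s < m"
  shows "(u + s) mod m \<noteq> u"
  using assms by (auto simp: mod_if)

lemma circ_edges_eq_image:
  assumes S: "\<forall>s\<in>S. 0 < s \<and> s < int m"
  shows "circ_edges m S = (\<lambda>(s, u). {u, (u + s) mod m}) ` (nat ` S \<times> {0..<m})"
    (is "_ = ?img")
proof
  show "circ_edges m S \<subseteq> ?img"
  proof
    fix e assume "e \<in> circ_edges m S"
    then obtain u v s where e: "e = {u, v}" "u < m" "v < m" "s \<in> S"
      and diff: "(int u - int v) mod int m = s mod int m \<or> (int u - int v) mod int m = (- s) mod int m"
      unfolding circ_edges_def by blast
    have "0 < s" using S \<open>s \<in> S\<close> by blast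
    then have s: "s = int (nat s)" by simp
    have "(int u - int v) mod int m = int (nat s) mod int m \<or>
        (int v - int u) mod int m = int (nat s) mod int m"
      using diff int_mod_eq_uminus_iff[of "int u - int v" "int m" s] s by auto
    then have "u = (v + nat s) mod m \<or> v = (u + nat s) mod m"
      using int_mod_diff_eq_iff[OF e(2)] int_mod_diff_eq_iff[OF e(3)] by blast
    then show "e \<in> ?img" using e by (auto simp: insert_commute)
  qed
next
  have "{u, (u + nat s) mod m} \<in> circ_edges m S" if "s \<in> S" "u < m" for s u
  proof -
    define v where "v = (u + nat s) mod m"
    have "0 < s" "s < int m" using S \<open>s \<in> S\<close> by auto
    then have "v < m" "v \<noteq> u" using \<open>u < m\<close> by (auto simp: v_def mod_add_neq_self)
    moreover have "(int v - int u) mod int m = s mod int m"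
      using int_mod_diff_eq_iff[OF \<open>v < m\<close>, of u "nat s"] \<open>0 < s\<close> by (simp add: v_def)
    ultimately show "{u, (u + nat s) mod m} \<in> circ_edges m S"
      unfolding circ_edges_def v_def[symmetric] using \<open>u < m\<close> \<open>s \<in> S\<close>
      by (auto simp: insert_commute)
  qed
  then show "?img \<subseteq> circ_edges m S" by auto
qed

locale odd_circulant =
  fixes n :: nat and T :: "nat set"
  assumes two_le_n: "2 \<le> n" and finite_T: "finite T" and T_nonempty: "T \<noteq> {}"
    and generator_bounds: "s \<in> T \<Longrightarrow> 0 < s \<and> s < n"
    and generator_coprime: "s \<in> T \<Longrightarrow> coprime s (2 * n)"
begin

definition edge :: "nat \<Rightarrow> nat \<Rightarrow> nat set" where
  "edge s u = {u, (u + s) mod (2 * n)}"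

definition edges :: "nat set set" where
  "edges = (\<lambda>(s, u). edge s u) ` (T \<times> {0..<2 * n})"

definition cycle_pred :: "nat \<Rightarrow> nat \<Rightarrow> nat" where
  "cycle_pred s x = (x + 2 * n - s) mod (2 * n)"

definition inv_gen :: "nat \<Rightarrow> nat" where
  "inv_gen s = (SOME w. (s * w) mod (2 * n) = 1)"

text \<open>The position of \<open>u\<close> on the Hamiltonian cycle \<open>0, s, 2 s, \<dots>\<close> of the generator \<open>s\<close>.\<close>
definition cycle_pos :: "nat \<Rightarrow> nat \<Rightarrow> nat" where
  "cycle_pos s u = (u * inv_gen s) mod (2 * n)"

lemma generator_lt: "s \<in> T \<Longrightarrow> s < 2 * n"
  using generator_bounds by fastforce

lemma odd_generator: "s \<in> T \<Longrightarrow> odd s"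
  using generator_coprime two_le_n by (metis coprime_mult_right_iff coprime_right_2_iff_odd)

lemma inv_gen: "s \<in> T \<Longrightarrow> (s * inv_gen s) mod (2 * n) = 1"
proof -
  assume "s \<in> T"
  then obtain w where "[s * w = 1] (mod 2 * n)"
    using generator_coprime cong_solve_coprime_nat by fastforce
  then have "(s * w) mod (2 * n) = 1" using two_le_n by (simp add: cong_def)
  then show ?thesis unfolding inv_gen_def by (rule someI)
qed

lemma cycle_pos_lt: "cycle_pos s u < 2 * n"
  using two_le_n by (simp add: cycle_pos_def)

lemma bij_betw_cycle_pos:
  assumes "s \<in> T"
  shows "bij_betw (cycle_pos s) {0..<2 * n} {0..<2 * n}"
proof -
  have "inj_on (cycle_pos s) {0..<2 * n}"
    unfolding cycle_pos_def using inj_on_mod_mult_inverse[OF inv_gen[OF assms]] .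
  moreover have "cycle_pos s ` {0..<2 * n} \<subseteq> {0..<2 * n}" using cycle_pos_lt by auto
  ultimately show ?thesis by (simp add: bij_betw_def endo_inj_surj)
qed

lemma cycle_pos_eq_0_iff: "s \<in> T \<Longrightarrow> u < 2 * n \<Longrightarrow> cycle_pos s u = 0 \<longleftrightarrow> u = 0"
  unfolding cycle_pos_def by (rule mod_mult_inverse_eq_0_iff[OF inv_gen])

lemma even_cycle_pos_iff: "s \<in> T \<Longrightarrow> even (cycle_pos s u) \<longleftrightarrow> even u"
  unfolding cycle_pos_def using even_mod_mult_inverse_iff[OF inv_gen] by simp

lemma cycle_pred_lt: "cycle_pred s x < 2 * n"
  using two_le_n by (simp add: cycle_pred_def)

lemma cycle_pred_neq: "s \<in> T \<Longrightarrow> x < 2 * n \<Longrightarrow> x \<noteq> cycle_pred s x"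
  using generator_bounds[of s] by (auto simp: cycle_pred_def mod_if)

lemma edge_cycle_pred: "s \<in> T \<Longrightarrow> x < 2 * n \<Longrightarrow> (cycle_pred s x + s) mod (2 * n) = x"
  using generator_lt[of s] by (auto simp: cycle_pred_def mod_if)

lemma cycle_pos_cycle_pred:
  assumes "s \<in> T" "x < 2 * n"
  shows "cycle_pos s (cycle_pred s x) = (cycle_pos s x + 2 * n - 1) mod (2 * n)"
proof -
  have "cycle_pos s x = (cycle_pos s (cycle_pred s x) + 1) mod (2 * n)"
    using mod_mult_inverse_add[OF inv_gen[OF assms(1)], of "cycle_pred s x"] edge_cycle_pred[OF assms]
    unfolding cycle_pos_def by (metis mod_mult_left_eq)
  then show ?thesis using cycle_pos_lt[of s "cycle_pred s x"] two_le_n by (auto simp: mod_if)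
qed

lemma inj_on_edge: "inj_on (\<lambda>(s, u). edge s u) (T \<times> {0..<2 * n})"
proof (rule inj_onI)
  fix p q assume "p \<in> T \<times> {0..<2 * n}" "q \<in> T \<times> {0..<2 * n}"
    and eq: "(\<lambda>(s, u). edge s u) p = (\<lambda>(s, u). edge s u) q"
  then obtain s u s' u' where pq: "p = (s, u)" "q = (s', u')" "s \<in> T" "s' \<in> T" "u < 2 * n" "u' < 2 * n"
    by auto
  have "0 < s" "s < n" "0 < s'" "s' < n" using generator_bounds pq by auto
  then show "p = q"
    using eq pq by (auto simp: edge_def doubleton_eq_iff mod_if split: if_splits)
qed

lemma mem_edge_iff:
  assumes "s \<in> T" "u < 2 * n" "x < 2 * n"
  shows "x \<in> edge s u \<longleftrightarrow> u = x \<or> u = cycle_pred s x"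
  using assms generator_lt[OF assms(1)] by (auto simp: edge_def cycle_pred_def mod_if)

lemma incident_edges:
  assumes "x < 2 * n"
  shows "{e \<in> edges. x \<in> e} = (\<lambda>(s, u). edge s u) ` (SIGMA s:T. {x, cycle_pred s x})"
  using assms cycle_pred_lt by (auto simp: edges_def mem_edge_iff)

lemma sum_incident_edges:
  assumes "x < 2 * n"
  shows "(\<Sum>e\<in>{e \<in> edges. x \<in> e}. h e) = (\<Sum>s\<in>T. h (edge s x) + h (edge s (cycle_pred s x)))"
proof -
  have "inj_on (\<lambda>(s, u). edge s u) (SIGMA s:T. {x, cycle_pred s x})"
    using inj_on_edge by (rule inj_on_subset) (use assms cycle_pred_lt in auto)
  then have "(\<Sum>e\<in>{e \<in> edges. x \<in> e}. h e) = (\<Sum>(s, u)\<in>(SIGMA s:T. {x, cycle_pred s x}). h (edge s u))"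
    by (simp add: incident_edges[OF assms] sum.reindex split_def)
  also have "\<dots> = (\<Sum>s\<in>T. \<Sum>u\<in>{x, cycle_pred s x}. h (edge s u))"
    using finite_T by (simp add: sum.Sigma)
  also have "\<dots> = (\<Sum>s\<in>T. h (edge s x) + h (edge s (cycle_pred s x)))"
    using cycle_pred_neq[OF _ assms] by (intro sum.cong) auto
  finally show ?thesis .
qed

lemma degree_edges: "x < 2 * n \<Longrightarrow> card {e \<in> edges. x \<in> e} = 2 * card T"
  using sum_incident_edges[of x "\<lambda>_. 1::nat"] by simp

lemma edges_are_pairs:
  assumes "e \<in> edges"
  shows "\<exists>u\<in>{0..<2 * n}. \<exists>v\<in>{0..<2 * n}. u \<noteq> v \<and> e = {u, v}"
proof -
  obtain s u where "s \<in> T" "u < 2 * n" and e: "e = {u, (u + s) mod (2 * n)}"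
    using assms by (auto simp: edges_def edge_def)
  moreover have "0 < s" "s < 2 * n" using generator_bounds[OF \<open>s \<in> T\<close>] by auto
  ultimately have "u \<in> {0..<2 * n}" "(u + s) mod (2 * n) \<in> {0..<2 * n}" "u \<noteq> (u + s) mod (2 * n)"
    using mod_add_neq_self[of u "2 * n" s] by auto
  then show ?thesis using e by blast
qed

lemma edges_change_parity:
  assumes "{x, y} \<in> edges" "x \<noteq> y"
  shows "even x \<longleftrightarrow> odd y"
proof -
  obtain s u where "s \<in> T" "{x, y} = {u, (u + s) mod (2 * n)}"
    using assms by (auto simp: edges_def edge_def)
  moreover have "even ((u + s) mod (2 * n)) \<longleftrightarrow> even (u + s)" by (simp add: dvd_mod_iff)
  ultimately show ?thesis using odd_generator assms(2) by (auto simp: doubleton_eq_iff)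
qed

definition edge_label :: "(nat \<Rightarrow> nat) \<Rightarrow> nat set \<Rightarrow> nat" where
  "edge_label r = (\<lambda>(s, u). 2 * n * r s + zigzag n (cycle_pos s u))
                  \<circ> inv_into (T \<times> {0..<2 * n}) (\<lambda>(s, u). edge s u)"

lemma edge_label_edge:
  "s \<in> T \<Longrightarrow> u < 2 * n \<Longrightarrow> edge_label r (edge s u) = 2 * n * r s + zigzag n (cycle_pos s u)"
  using inv_into_f_f[OF inj_on_edge, of "(s, u)"] by (simp add: edge_label_def)

lemma card_edges: "card edges = card T * (2 * n)"
  using inj_on_edge finite_T by (simp add: edges_def card_image card_cartesian_product)

lemma bij_betw_edge_label:
  assumes "bij_betw r T {0..<card T}"
  shows "bij_betw (edge_label r) edges {1..card edges}"
proof -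
  have "bij_betw (inv_into (T \<times> {0..<2 * n}) (\<lambda>(s, u). edge s u)) edges (T \<times> {0..<2 * n})"
    unfolding edges_def by (rule bij_betw_inv_into[OF inj_on_imp_bij_betw[OF inj_on_edge]])
  moreover have "bij_betw (\<lambda>(s, u). 2 * n * r s + zigzag n (cycle_pos s u))
      (T \<times> {0..<2 * n}) {1..card T * (2 * n)}"
    using bij_betw_block_labels[OF assms, of "\<lambda>s. zigzag n \<circ> cycle_pos s"]
      bij_betw_trans[OF bij_betw_cycle_pos bij_betw_zigzag] by simp
  ultimately show ?thesis
    unfolding edge_label_def card_edges by (rule bij_betw_trans)
qed

lemma vertex_sum_edge_label:
  assumes "x < 2 * n"
  shows "vertex_sum edges (edge_label r) x = (\<Sum>s\<in>T. 4 * n * r s) + card T * zigzag_pair n x"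
proof -
  have "edge_label r (edge s x) + edge_label r (edge s (cycle_pred s x)) = 4 * n * r s + zigzag_pair n x"
    if "s \<in> T" for s
  proof -
    have "zigzag n (cycle_pos s x) + zigzag n (cycle_pos s (cycle_pred s x)) = zigzag_pair n (cycle_pos s x)"
      using zigzag_add_pred[OF cycle_pos_lt] two_le_n cycle_pos_cycle_pred[OF that assms] by simp
    also have "\<dots> = zigzag_pair n x"
      using cycle_pos_eq_0_iff[OF that assms] even_cycle_pos_iff[OF that] by (simp add: zigzag_pair_def)
    finally show ?thesis
      using that assms cycle_pred_lt by (simp add: edge_label_edge)
  qed
  then show ?thesis
    unfolding vertex_sum_def sum_incident_edges[OF assms] by (simp add: sum.distrib)
qed

lemma card_vertex_sums_ge_3:
  "local_antimagic {0..<2 * n} edges f \<Longrightarrow> 3 \<le> card (vertex_sum edges f ` {0..<2 * n})"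
proof (rule regular_local_antimagic_card_vertex_sums_ge_3)
  show "edges \<noteq> {}" using T_nonempty two_le_n by (auto simp: edges_def)
qed (use edges_are_pairs degree_edges in auto)

lemma local_antimagic_edge_label:
  assumes "bij_betw r T {0..<card T}"
  shows "local_antimagic {0..<2 * n} edges (edge_label r)"
  unfolding local_antimagic_def
proof (intro conjI ballI impI)
  show "bij_betw (edge_label r) edges {1..card edges}" using assms by (rule bij_betw_edge_label)
  fix x y assume "x \<in> {0..<2 * n}" "y \<in> {0..<2 * n}" "{x, y} \<in> edges" "x \<noteq> y"
  then have "zigzag_pair n x \<noteq> zigzag_pair n y"
    using edges_change_parity two_le_n by (auto simp: zigzag_pair_def)
  moreover have "card T \<noteq> 0" using finite_T T_nonempty by simp
  ultimately show "vertex_sum edges (edge_label r) x \<noteq> vertex_sum edges (edge_label r) y"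
    using \<open>x \<in> {0..<2 * n}\<close> \<open>y \<in> {0..<2 * n}\<close> by (simp add: vertex_sum_edge_label)
qed

lemma card_vertex_sums_edge_label: "card (vertex_sum edges (edge_label r) ` {0..<2 * n}) = 3"
proof -
  define A where "A = (\<Sum>s\<in>T. 4 * n * r s)"
  have "vertex_sum edges (edge_label r) ` {0..<2 * n} = (\<lambda>c. A + card T * c) ` zigzag_pair n ` {0..<2 * n}"
    by (force simp: vertex_sum_edge_label A_def)
  moreover have "inj_on (\<lambda>c. A + card T * c) X" for X
    using finite_T T_nonempty by (simp add: inj_on_def)
  moreover have "card (zigzag_pair n ` {0..<2 * n}) = 3"
    using two_le_n by (simp add: zigzag_pair_image)
  ultimately show ?thesis by (simp only: card_image)
qed

lemma chi_la_edges: "chi_la {0..<2 * n} edges = 3"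
proof -
  obtain r where "bij_betw r T {0..<card T}" using ex_bij_betw_finite_nat[OF finite_T] by blast
  then show ?thesis
    using local_antimagic_edge_label card_vertex_sums_edge_label card_vertex_sums_ge_3
    by (intro chi_la_eqI)
qed

end

theorem mainTheorem6:
  fixes n :: nat and as :: "int list"
  assumes "n \<ge> 2"
    and "sorted_wrt (<) as"
    and "\<forall>a\<in>set as. 1 < a \<and> a < int n \<and> gcd a (2 * int n) = 1"
  shows "chi_la (circ_vertices (2 * n)) (circ_edges (2 * n) (insert 1 (set as))) = 3"
proof -
  let ?S = "insert 1 (set as)"
  have S: "0 < s \<and> s < int n \<and> coprime (nat s) (2 * n)" if "s \<in> ?S" for s
  proof -
    have "0 < s" "s < int n" "gcd s (int (2 * n)) = 1" using assms(1,3) that by auto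
    then have "coprime (int (nat s)) (int (2 * n))" by (simp add: coprime_iff_gcd_eq_1)
    then show ?thesis using \<open>0 < s\<close> \<open>s < int n\<close> by (simp only: coprime_int_iff)
  qed
  interpret odd_circulant n "nat ` ?S"
  proof
    fix t assume "t \<in> nat ` ?S"
    then obtain s where "s \<in> ?S" "t = nat s" by blast
    then show "0 < t \<and> t < n" "coprime t (2 * n)" using S[of s] by auto
  qed (use assms(1) in auto)
  have "\<forall>s\<in>?S. 0 < s \<and> s < int (2 * n)" using S by fastforce
  then have "circ_edges (2 * n) ?S = edges"
    unfolding edges_def edge_def by (rule circ_edges_eq_image)
  then show ?thesis using chi_la_edges by (simp add: circ_vertices_def)
qed

end
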